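(* Suppose that $t=t(n)=O(\log n)$ is a positive integer. Then for all large enough $n$ and all positive integers $k$ with $1<n/k<t$, \[ \log(E_{n,k,t})=L_0(n,k,t)+O(\log^4 n). \]
   Context: $E_{n,k,t}$ is the expected number of unordered $t$-bounded $k$-colourings of the uniformly random graph $G_{n,1/2}$, i.e. partitions of $[n]$ into $k$ independent sets each of size at most $t$. Let $d_i=2^{\binom i2}i!$. For positive reals $k<n$ and a positive integer $t$, let $P^0_{n,k,t}$ be the set of $(n_i)_{i=1}^t\in\mathbb R^t$ with $n_i\ge0$, $\sum_{i=1}^t n_i=k$ and $\sum_{i=1}^t in_i=n$, and \[ L_0(n,k,t)=\sup_{(n_i)\in P^0_{n,k,t}}\Big\{n\log n-n+k-\sum_{i=1}^t n_i\log(n_id_i)\Big\}, \] with the convention $0\log 0=0$. Logarithms are natural. *)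

theory Defs
  imports "HOL-Probability.Probability" "HOL-Library.Disjoint_Sets" "HOL-Library.Landau_Symbols"
begin

definition pot_edges :: "nat \<Rightarrow> nat set set" where
  "pot_edges n = {e. e \<subseteq> {1..n} \<and> card e = 2}"

definition Gnp_half :: "nat \<Rightarrow> nat set set pmf" where
  "Gnp_half n = pmf_of_set (Pow (pot_edges n))"

definition indep_set :: "nat set set \<Rightarrow> nat set \<Rightarrow> bool" where
  "indep_set G B \<longleftrightarrow> (\<forall>e\<in>G. \<not> e \<subseteq> B)"

text \<open>Unordered t-bounded k-colourings of G: partitions of [n] into k independent
  sets (blocks, nonempty) each of size at most t.\<close>
definition bounded_colourings :: "nat \<Rightarrow> nat \<Rightarrow> nat \<Rightarrow> nat set set \<Rightarrow> nat set set set" where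
  "bounded_colourings n k t G =
     {P. partition_on {1..n} P \<and> card P = k \<and> (\<forall>B\<in>P. indep_set G B \<and> card B \<le> t)}"

definition E_col :: "nat \<Rightarrow> nat \<Rightarrow> nat \<Rightarrow> real" where
  "E_col n k t = measure_pmf.expectation (Gnp_half n) (\<lambda>G. real (card (bounded_colourings n k t G)))"

definition d_const :: "nat \<Rightarrow> real" where
  "d_const i = 2 powr (real (i choose 2)) * fact i"

definition xlog_term :: "nat \<Rightarrow> real \<Rightarrow> real" where
  "xlog_term i x = (if x = 0 then 0 else x * ln (x * d_const i))"

definition P0 :: "real \<Rightarrow> real \<Rightarrow> nat \<Rightarrow> (nat \<Rightarrow> real) set" where
  "P0 n k t = {x. (\<forall>i\<in>{1..t}. x i \<ge> 0) \<and> (\<forall>i. i \<notin> {1..t} \<longrightarrow> x i = 0)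
                 \<and> (\<Sum>i=1..t. x i) = k \<and> (\<Sum>i=1..t. real i * x i) = n}"

definition L0 :: "real \<Rightarrow> real \<Rightarrow> nat \<Rightarrow> real" where
  "L0 n k t = (SUP x\<in>P0 n k t. n * ln n - n + k - (\<Sum>i=1..t. xlog_term i (x i)))"

end

(* By linearity of expectation, E_{n,k,t} is the sum, over the partitions of [n] into k blocks
   of size at most t, of 2 to the power minus the number of pairs inside blocks. Grouping the
   partitions by their block type c (c_i blocks of size i) gives
     E_{n,k,t} = sum over types c of  n! prod_i d_i^(-c_i) / c_i!.
   Since m ln m - m <= ln m! <= m ln m - m + 1 + ln (m + 1), the logarithm of the term of type c
   is the objective of L_0 at c up to O(t log n). There are at most (k + 1)^t types, which gives
   the upper bound. For the lower bound, a near-optimal point of P^0 is rounded to a block type,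
   moving each coordinate by at most t; this changes the objective by O(t^2 log n + t^4).
   With t = O(log n) every error term is O(log^4 n). *)

theory Submission
  imports Defs "HOL-Combinatorics.Multiset_Permutations"
begin

definition bounded_partitions :: "nat \<Rightarrow> nat \<Rightarrow> nat \<Rightarrow> nat set set set" where
  "bounded_partitions n k t = {P. partition_on {1..n} P \<and> card P = k \<and> (\<forall>B\<in>P. card B \<le> t)}"

lemma finite_bounded_partitions: "finite (bounded_partitions n k t)"
  by (rule finite_subset[OF _ finitely_many_partition_on[of "{1..n}"]])
     (auto simp: bounded_partitions_def)

lemma finite_pot_edges: "finite (pot_edges n)"
  unfolding pot_edges_def by (rule finite_subset[of _ "Pow {1..n}"]) auto

lemma card_pot_edges_inside_blocks:
  assumes P: "partition_on {1..n} P"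
  shows "card {e\<in>pot_edges n. \<exists>B\<in>P. e \<subseteq> B} = (\<Sum>B\<in>P. card B choose 2)"
proof -
  have finP: "finite P" using finite_elements[OF _ P] by simp
  have sub: "B \<subseteq> {1..n}" if "B \<in> P" for B using partition_onD1[OF P] that by auto
  then have fin: "finite B" if "B \<in> P" for B using that finite_subset by blast
  have "{e\<in>pot_edges n. \<exists>B\<in>P. e \<subseteq> B} = (\<Union>B\<in>P. {e. e \<subseteq> B \<and> card e = 2})"
    using sub unfolding pot_edges_def by blast
  also have "card \<dots> = (\<Sum>B\<in>P. card {e. e \<subseteq> B \<and> card e = 2})"
  proof (rule card_UN_disjoint[OF finP])
    show "\<forall>B\<in>P. finite {e. e \<subseteq> B \<and> card e = 2}"
      using fin by (auto intro: finite_subset[of _ "Pow B" for B])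
    show "\<forall>B\<in>P. \<forall>B'\<in>P. B \<noteq> B' \<longrightarrow> {e. e \<subseteq> B \<and> card e = 2} \<inter> {e. e \<subseteq> B' \<and> card e = 2} = {}"
    proof (intro ballI impI)
      fix B B' assume "B \<in> P" "B' \<in> P" "B \<noteq> B'"
      then have "B \<inter> B' = {}"
        using partition_onD2[OF P] by (auto simp: pairwise_def disjnt_def)
      then show "{e. e \<subseteq> B \<and> card e = 2} \<inter> {e. e \<subseteq> B' \<and> card e = 2} = {}"
        by (auto dest: subset_trans[of _ _ "B \<inter> B'", OF Int_greatest])
    qed
  qed
  also have "\<dots> = (\<Sum>B\<in>P. card B choose 2)"
    using fin by (intro sum.cong refl n_subsets)
  finally show ?thesis .
qed

lemma fraction_indep_blocks:
  assumes "partition_on {1..n} P"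
  shows "real (card {G\<in>Pow (pot_edges n). \<forall>B\<in>P. indep_set G B}) / card (Pow (pot_edges n))
    = (1/2) ^ (\<Sum>B\<in>P. card B choose 2)"
proof -
  let ?pot = "pot_edges n"
  let ?inside = "{e\<in>?pot. \<exists>B\<in>P. e \<subseteq> B}"
  have "{G\<in>Pow ?pot. \<forall>B\<in>P. indep_set G B} = Pow (?pot - ?inside)"
    unfolding indep_set_def by blast
  moreover have "card (?pot - ?inside) = card ?pot - card ?inside"
    using finite_pot_edges by (intro card_Diff_subset) auto
  moreover have le: "card ?inside \<le> card ?pot" by (intro card_mono finite_pot_edges) auto
  ultimately have "real (card {G\<in>Pow ?pot. \<forall>B\<in>P. indep_set G B}) / card (Pow ?pot)
      = 2 ^ (card ?pot - card ?inside) / 2 ^ card ?pot"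
    using finite_pot_edges by (simp add: card_Pow)
  also have "\<dots> = (1/2) ^ card ?inside"
    using le by (simp add: power_diff power_one_over)
  finally show ?thesis
    using card_pot_edges_inside_blocks[OF assms] by simp
qed

lemma E_col_eq_sum_bounded_partitions:
  "E_col n k t = (\<Sum>P\<in>bounded_partitions n k t. (1/2::real) ^ (\<Sum>B\<in>P. card B choose 2))"
proof -
  let ?pot = "pot_edges n" and ?Ps = "bounded_partitions n k t"
  let ?indep = "\<lambda>P. {G\<in>Pow ?pot. \<forall>B\<in>P. indep_set G B}"
  have finpow: "finite (Pow ?pot)" using finite_pot_edges by simp
  have colourings: "bounded_colourings n k t G = {P\<in>?Ps. \<forall>B\<in>P. indep_set G B}" for G
    unfolding bounded_colourings_def bounded_partitions_def by auto
  have "(\<Sum>G\<in>Pow ?pot. real (card (bounded_colourings n k t G)))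
      = (\<Sum>G\<in>Pow ?pot. \<Sum>P\<in>?Ps. if \<forall>B\<in>P. indep_set G B then 1 else 0)"
    unfolding colourings by (simp add: sum.If_cases[OF finite_bounded_partitions] Int_def)
  also have "\<dots> = (\<Sum>P\<in>?Ps. \<Sum>G\<in>Pow ?pot. if \<forall>B\<in>P. indep_set G B then 1 else 0)"
    by (rule sum.swap)
  also have "\<dots> = (\<Sum>P\<in>?Ps. real (card (?indep P)))"
    using finpow by (intro sum.cong refl) (simp add: sum.If_cases Int_def)
  finally have count: "(\<Sum>G\<in>Pow ?pot. real (card (bounded_colourings n k t G)))
      = (\<Sum>P\<in>?Ps. real (card (?indep P)))" .
  have "E_col n k t = (\<Sum>G\<in>Pow ?pot. real (card (bounded_colourings n k t G))) / card (Pow ?pot)"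
    unfolding E_col_def Gnp_half_def by (rule integral_pmf_of_set) (use finpow in auto)
  also have "\<dots> = (\<Sum>P\<in>?Ps. real (card (?indep P)) / card (Pow ?pot))"
    by (simp only: count sum_divide_distrib)
  also have "\<dots> = (\<Sum>P\<in>?Ps. (1/2) ^ (\<Sum>B\<in>P. card B choose 2))"
    by (intro sum.cong refl fraction_indep_blocks) (simp add: bounded_partitions_def)
  finally show ?thesis .
qed

fun ordered_partitions :: "'a set \<Rightarrow> nat list \<Rightarrow> 'a set list set" where
  "ordered_partitions S [] = (if S = {} then {[]} else {})"
| "ordered_partitions S (i # is) =
     (\<Union>B\<in>{B. B \<subseteq> S \<and> card B = i}. (#) B ` ordered_partitions (S - B) is)"

lemma finite_ordered_partitions: "finite S \<Longrightarrow> finite (ordered_partitions S is)"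
proof (induction "is" arbitrary: S)
  case (Cons i "is")
  have "finite {B. B \<subseteq> S \<and> card B = i}"
    using Cons.prems by (auto intro: finite_subset[of _ "Pow S"])
  then show ?case using Cons by auto
qed simp

lemma card_ordered_partitions:
  assumes "finite S"
  shows "real (card (ordered_partitions S is)) =
     (if sum_list is = card S then fact (card S) / (\<Prod>i\<leftarrow>is. fact i) else 0)"
  using assms
proof (induction "is" arbitrary: S)
  case Nil then show ?case by auto
next
  case (Cons i "is")
  let ?C = "{B. B \<subseteq> S \<and> card B = i}"
  let ?rest = "if sum_list is = card S - i then fact (card S - i) / (\<Prod>i\<leftarrow>is. fact i) else 0"
  have finC: "finite ?C" using Cons.prems by (auto intro: finite_subset[of _ "Pow S"])
  have "card (ordered_partitions S (i # is)) = (\<Sum>B\<in>?C. card ((#) B ` ordered_partitions (S - B) is))"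
    unfolding ordered_partitions.simps
    by (rule card_UN_disjoint[OF finC]) (use Cons.prems in \<open>auto intro: finite_ordered_partitions\<close>)
  also have "\<dots> = (\<Sum>B\<in>?C. card (ordered_partitions (S - B) is))"
    by (intro sum.cong refl card_image) auto
  finally have "real (card (ordered_partitions S (i # is)))
      = (\<Sum>B\<in>?C. real (card (ordered_partitions (S - B) is)))" by simp
  also have "\<dots> = (\<Sum>B\<in>?C. ?rest)"
  proof (rule sum.cong[OF refl])
    fix B assume "B \<in> ?C"
    then have "card (S - B) = card S - i"
      using Cons.prems by (auto simp: card_Diff_subset finite_subset)
    then show "real (card (ordered_partitions (S - B) is)) = ?rest"
      using Cons.IH[of "S - B"] Cons.prems by simp
  qed
  also have "\<dots> = real (card S choose i) * ?rest"
    using n_subsets[OF Cons.prems, of i] by simp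
  also have "\<dots> = (if sum_list (i # is) = card S then fact (card S) / (\<Prod>i\<leftarrow>i # is. fact i) else 0)"
    by (cases "i \<le> card S") (auto simp: binomial_fact binomial_eq_0 field_simps)
  finally show ?case .
qed

lemma mem_ordered_partitions_iff:
  assumes "finite S" "0 \<notin> set is"
  shows "Bs \<in> ordered_partitions S is \<longleftrightarrow>
    map card Bs = is \<and> distinct Bs \<and> disjoint (set Bs) \<and> \<Union>(set Bs) = S"
  using assms
proof (induction "is" arbitrary: S Bs)
  case Nil then show ?case by auto
next
  case (Cons i "is")
  show ?case
  proof
    assume "Bs \<in> ordered_partitions S (i # is)"
    then obtain B Bs' where B: "B \<subseteq> S" "card B = i" and Bs: "Bs = B # Bs'"
      and Bs': "Bs' \<in> ordered_partitions (S - B) is"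
      by auto
    have IH: "map card Bs' = is" "distinct Bs'" "disjoint (set Bs')" "\<Union>(set Bs') = S - B"
      using Cons.IH[of "S - B"] Bs' Cons.prems by auto
    have "B \<noteq> {}" using B Cons.prems by auto
    then have "B \<notin> set Bs'" using IH(4) by auto
    moreover have "disjoint (set Bs)"
      unfolding Bs using IH(3,4) by (auto simp: pairwise_insert disjnt_def)
    ultimately show "map card Bs = i # is \<and> distinct Bs \<and> disjoint (set Bs) \<and> \<Union>(set Bs) = S"
      using IH B Bs by auto
  next
    assume R: "map card Bs = i # is \<and> distinct Bs \<and> disjoint (set Bs) \<and> \<Union>(set Bs) = S"
    then obtain B Bs' where Bs: "Bs = B # Bs'" by (cases Bs) auto
    have "B \<inter> \<Union>(set Bs') = {}"
      using R unfolding Bs by (auto simp: pairwise_insert disjnt_def)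
    then have "map card Bs' = is \<and> distinct Bs' \<and> disjoint (set Bs') \<and> \<Union>(set Bs') = S - B"
      using R unfolding Bs by (auto simp: pairwise_insert)
    then have "Bs' \<in> ordered_partitions (S - B) is" using Cons.IH[of "S - B"] Cons.prems by auto
    then show "Bs \<in> ordered_partitions S (i # is)" using R Bs by auto
  qed
qed

definition block_types :: "nat \<Rightarrow> nat \<Rightarrow> nat \<Rightarrow> nat multiset set" where
  "block_types n k t = {M. set_mset M \<subseteq> {1..t} \<and> size M = k \<and> sum_mset M = n}"

lemma finite_block_types: "finite (block_types n k t)"
proof (rule finite_subset)
  show "block_types n k t \<subseteq> mset ` {xs. set xs \<subseteq> {1..t} \<and> length xs = k}"
  proof
    fix M assume "M \<in> block_types n k t"
    moreover obtain xs where "mset xs = M" using ex_mset by blast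
    ultimately show "M \<in> mset ` {xs. set xs \<subseteq> {1..t} \<and> length xs = k}"
      by (auto simp: block_types_def)
  qed
qed (auto intro: finite_lists_length_eq)

lemma sum_mset_eq_sum_count:
  fixes f :: "'a \<Rightarrow> 'b::comm_semiring_1"
  assumes "finite A" "set_mset M \<subseteq> A"
  shows "(\<Sum>x\<in>#M. f x) = (\<Sum>i\<in>A. of_nat (count M i) * f i)"
  using assms(2)
proof (induction M)
  case (add x M)
  have "(\<Sum>i\<in>A. of_nat (count (add_mset x M) i) * f i)
      = (\<Sum>i\<in>A. of_nat (count M i) * f i + (if i = x then f i else 0))"
    by (intro sum.cong) (auto simp: algebra_simps)
  then show ?case using add assms(1) by (simp add: sum.distrib add.commute)
qed simp

lemma prod_mset_eq_prod_count:
  fixes g :: "'a \<Rightarrow> 'b::comm_monoid_mult"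
  assumes "finite A" "set_mset M \<subseteq> A"
  shows "(\<Prod>x\<in>#M. g x) = (\<Prod>i\<in>A. g i ^ count M i)"
  unfolding image_prod_mset_multiplicity
  using assms by (intro prod.mono_neutral_left) (auto simp: not_in_iff)

lemma size_eq_sum_count:
  assumes "finite A" "set_mset M \<subseteq> A"
  shows "size M = (\<Sum>i\<in>A. count M i)"
  using sum_mset_eq_sum_count[OF assms, of "\<lambda>_. 1::nat"] by simp

lemma sum_mset_eq_sum_mult_count:
  assumes "finite A" "set_mset M \<subseteq> A"
  shows "sum_mset M = (\<Sum>i\<in>A. i * count M i)"
  using sum_mset_eq_sum_count[OF assms, of "\<lambda>i. i"] by (simp add: mult.commute)

lemma mem_block_types_iff:
  "M \<in> block_types n k t \<longleftrightarrow>
     set_mset M \<subseteq> {1..t} \<and> (\<Sum>i=1..t. count M i) = k \<and> (\<Sum>i=1..t. i * count M i) = n"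
  unfolding block_types_def
  using size_eq_sum_count[of "{1..t}" M] sum_mset_eq_sum_mult_count[of "{1..t}" M] by auto

lemma block_types_count:
  assumes "M \<in> block_types n k t"
  shows "(\<Sum>i=1..t. count M i) = k" "(\<Sum>i=1..t. i * count M i) = n"
  using assms by (simp_all add: mem_block_types_iff)

lemma distinct_lists_of_bounded_partitions:
  "{Bs. distinct Bs \<and> set Bs \<in> bounded_partitions n k t}
   = (\<Union>is\<in>{is. mset is \<in> block_types n k t}. ordered_partitions {1..n} is)"
proof (intro set_eqI iffI)
  fix Bs assume "Bs \<in> {Bs. distinct Bs \<and> set Bs \<in> bounded_partitions n k t}"
  then have d: "distinct Bs" and P: "partition_on {1..n} (set Bs)" and c: "card (set Bs) = k"
    and T: "\<forall>B\<in>set Bs. card B \<le> t" by (auto simp: bounded_partitions_def)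
  have fin: "finite B" if "B \<in> set Bs" for B
    using partition_onD1[OF P] that by (metis Union_upper finite_atLeastAtMost finite_subset)
  have ne: "card B \<noteq> 0" if "B \<in> set Bs" for B
    using partition_onD3[OF P] fin that by auto
  have "sum_list (map card Bs) = card (\<Union>(set Bs))"
    using card_Union_disjoint[OF partition_onD2[OF P] fin] d
    by (simp add: sum_list_distinct_conv_sum_set)
  also have "\<dots> = n" by (simp add: partition_onD1[OF P, symmetric])
  finally have "mset (map card Bs) \<in> block_types n k t"
    using d c T ne
    by (auto simp: block_types_def distinct_card Suc_le_eq sum_mset_sum_list simp del: mset_map)
  moreover have "Bs \<in> ordered_partitions {1..n} (map card Bs)"
    using mem_ordered_partitions_iff[of "{1..n}" "map card Bs" Bs] ne d
      partition_onD1[OF P] partition_onD2[OF P] by force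
  ultimately show "Bs \<in> (\<Union>is\<in>{is. mset is \<in> block_types n k t}. ordered_partitions {1..n} is)"
    by blast
next
  fix Bs assume "Bs \<in> (\<Union>is\<in>{is. mset is \<in> block_types n k t}. ordered_partitions {1..n} is)"
  then obtain "is" where "is": "mset is \<in> block_types n k t" and Bs: "Bs \<in> ordered_partitions {1..n} is"
    by auto
  have "0 \<notin> set is" using "is" by (auto simp: block_types_def)
  then have R: "map card Bs = is" "distinct Bs" "disjoint (set Bs)" "\<Union>(set Bs) = {1..n}"
    using mem_ordered_partitions_iff[of "{1..n}" "is" Bs] Bs by auto
  have "{} \<notin> set Bs" using R(1) \<open>0 \<notin> set is\<close> by force
  then have "partition_on {1..n} (set Bs)" using R by (auto simp: partition_on_def)
  moreover have "card (set Bs) = k"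
    using R "is" by (auto simp: block_types_def distinct_card dest: arg_cong[of _ _ length])
  moreover have "\<forall>B\<in>set Bs. card B \<le> t" using R(1) "is" by (fastforce simp: block_types_def)
  ultimately show "Bs \<in> {Bs. distinct Bs \<and> set Bs \<in> bounded_partitions n k t}"
    using R by (auto simp: bounded_partitions_def)
qed

lemma finite_lists_of_block_types: "finite {is. mset is \<in> block_types n k t}"
  by (rule finite_subset[of _ "{xs. set xs \<subseteq> {1..t} \<and> length xs = k}"])
     (auto simp: block_types_def intro: finite_lists_length_eq)

lemma sum_permutations_of_partition:
  assumes "finite P"
  shows "(\<Sum>Bs\<in>permutations_of_set P. \<Prod>B\<leftarrow>Bs. (1/2::real) ^ (card B choose 2))
    = fact (card P) * (1/2) ^ (\<Sum>B\<in>P. card B choose 2)"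
proof -
  have "(\<Sum>Bs\<in>permutations_of_set P. \<Prod>B\<leftarrow>Bs. (1/2::real) ^ (card B choose 2))
      = (\<Sum>Bs\<in>permutations_of_set P. \<Prod>B\<in>P. (1/2) ^ (card B choose 2))"
    by (rule sum.cong[OF refl])
       (auto simp: permutations_of_set_def prod.distinct_set_conv_list[symmetric])
  then show ?thesis using assms by (simp add: power_sum)
qed

lemma sum_ordered_partitions:
  assumes "finite S" "sum_list is = card S" "0 \<notin> set is"
  shows "(\<Sum>Bs\<in>ordered_partitions S is. \<Prod>B\<leftarrow>Bs. (1/2::real) ^ (card B choose 2))
    = fact (card S) * (\<Prod>i\<leftarrow>is. 1 / d_const i)"
proof -
  have "(\<Sum>Bs\<in>ordered_partitions S is. \<Prod>B\<leftarrow>Bs. (1/2::real) ^ (card B choose 2))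
      = (\<Sum>Bs\<in>ordered_partitions S is. \<Prod>i\<leftarrow>is. (1/2) ^ (i choose 2))"
  proof (rule sum.cong[OF refl])
    fix Bs assume "Bs \<in> ordered_partitions S is"
    then have "is = map card Bs" using mem_ordered_partitions_iff[OF assms(1,3)] by auto
    then show "(\<Prod>B\<leftarrow>Bs. (1/2::real) ^ (card B choose 2)) = (\<Prod>i\<leftarrow>is. (1/2) ^ (i choose 2))"
      by (simp add: comp_def)
  qed
  also have "\<dots> = fact (card S) * ((\<Prod>i\<leftarrow>is. (1/2::real) ^ (i choose 2)) / (\<Prod>i\<leftarrow>is. fact i))"
    using card_ordered_partitions[OF assms(1), of "is"] assms(2) by simp
  also have "(\<Prod>i\<leftarrow>is. (1/2::real) ^ (i choose 2)) / (\<Prod>i\<leftarrow>is. fact i) = (\<Prod>i\<leftarrow>is. 1 / d_const i)"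
    by (induction "is") (simp_all add: d_const_def powr_realpow power_one_over field_simps)
  finally show ?thesis .
qed

lemma ordered_partitions_disjoint:
  assumes "finite S" "0 \<notin> set is" "0 \<notin> set js" "is \<noteq> js"
  shows "ordered_partitions S is \<inter> ordered_partitions S js = {}"
  using mem_ordered_partitions_iff[OF assms(1,2)] mem_ordered_partitions_iff[OF assms(1,3)] assms(4)
  by auto

lemma fact_mult_sum_bounded_partitions:
  "fact k * (\<Sum>P\<in>bounded_partitions n k t. (1/2::real) ^ (\<Sum>B\<in>P. card B choose 2))
   = fact n * (\<Sum>is | mset is \<in> block_types n k t. \<Prod>i\<leftarrow>is. 1 / d_const i)"
proof -
  let ?w = "\<lambda>Bs. \<Prod>B\<leftarrow>Bs. (1/2::real) ^ (card B choose 2)"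
  let ?Ps = "bounded_partitions n k t" and ?L = "{is. mset is \<in> block_types n k t}"
  have no0: "0 \<notin> set is" and sum: "sum_list is = n" if "is \<in> ?L" for "is"
    using that by (auto simp: block_types_def sum_mset_sum_list)
  have "fact k * (\<Sum>P\<in>?Ps. (1/2::real) ^ (\<Sum>B\<in>P. card B choose 2))
      = (\<Sum>P\<in>?Ps. \<Sum>Bs\<in>permutations_of_set P. ?w Bs)"
    unfolding sum_distrib_left
    by (intro sum.cong refl, subst sum_permutations_of_partition)
       (auto simp: bounded_partitions_def intro: finite_elements)
  also have "\<dots> = sum ?w (\<Union>P\<in>?Ps. permutations_of_set P)"
    by (rule sum.UNION_disjoint[symmetric])
       (simp_all add: finite_bounded_partitions, auto simp: permutations_of_set_def)
  also have "(\<Union>P\<in>?Ps. permutations_of_set P) = {Bs. distinct Bs \<and> set Bs \<in> ?Ps}"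
    by (auto simp: permutations_of_set_def)
  also have "\<dots> = (\<Union>is\<in>?L. ordered_partitions {1..n} is)"
    by (rule distinct_lists_of_bounded_partitions)
  also have "sum ?w \<dots> = (\<Sum>is\<in>?L. \<Sum>Bs\<in>ordered_partitions {1..n} is. ?w Bs)"
    using no0 by (intro sum.UNION_disjoint ballI impI ordered_partitions_disjoint)
      (auto simp: finite_lists_of_block_types finite_ordered_partitions)
  also have "\<dots> = (\<Sum>is\<in>?L. fact n * (\<Prod>i\<leftarrow>is. 1 / d_const i))"
    using sum_ordered_partitions[of "{1..n}"] no0 sum by (intro sum.cong refl) simp
  finally show ?thesis by (simp add: sum_distrib_left)
qed

text \<open>With \<open>c\<^sub>i = count M i\<close>, there are \<open>n! / \<Prod>\<^sub>i (i!^c\<^sub>i c\<^sub>i!)\<close> partitions of \<open>[n]\<close> of block type \<open>M\<close>,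
  each a colouring with probability \<open>2^(-\<Sum>\<^sub>i c\<^sub>i (i choose 2))\<close>.\<close>
definition type_weight :: "nat \<Rightarrow> nat \<Rightarrow> nat multiset \<Rightarrow> real" where
  "type_weight n t M = fact n * (\<Prod>i=1..t. (1 / d_const i) ^ count M i / fact (count M i))"

lemma sum_permutations_of_block_type:
  assumes M: "M \<in> block_types n k t"
  shows "(\<Sum>is\<in>permutations_of_multiset M. \<Prod>i\<leftarrow>is. 1 / d_const i)
    = fact k * (\<Prod>i=1..t. (1 / d_const i) ^ count M i / fact (count M i))"
proof -
  let ?g = "\<lambda>i. 1 / d_const i"
  have sub: "set_mset M \<subseteq> {1..t}" and size: "size M = k" using M by (auto simp: block_types_def)
  have "(\<Prod>i\<leftarrow>is. ?g i) = (\<Prod>i=1..t. ?g i ^ count M i)" if "is \<in> permutations_of_multiset M" for "is"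
  proof -
    have "(\<Prod>i\<leftarrow>is. ?g i) = (\<Prod>x\<in>#M. ?g x)"
      using that by (simp add: permutations_of_multiset_def flip: prod_mset_prod_list)
    then show ?thesis using prod_mset_eq_prod_count[OF _ sub] by simp
  qed
  then have "(\<Sum>is\<in>permutations_of_multiset M. \<Prod>i\<leftarrow>is. ?g i)
      = real (card (permutations_of_multiset M)) * (\<Prod>i=1..t. ?g i ^ count M i)"
    by simp
  also have "real (card (permutations_of_multiset M)) = fact k / (\<Prod>i=1..t. fact (count M i))"
  proof -
    have "real (card (permutations_of_multiset M)) = fact k / (\<Prod>x\<in>set_mset M. fact (count M x))"
      unfolding card_permutations_of_multiset(1) size[symmetric]
      using real_of_nat_div[OF card_permutations_of_multiset(2)[of M]] by (simp add: of_nat_prod)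
    moreover have "(\<Prod>x\<in>set_mset M. fact (count M x)) = (\<Prod>i=1..t. fact (count M i) :: real)"
      using sub by (intro prod.mono_neutral_left) (auto simp: not_in_iff)
    ultimately show ?thesis by simp
  qed
  finally show ?thesis by (simp add: prod_dividef)
qed

lemma E_col_eq_sum_block_types:
  "E_col n k t = (\<Sum>M\<in>block_types n k t. type_weight n t M)"
proof -
  let ?g = "\<lambda>i. 1 / d_const i" and ?L = "{is. mset is \<in> block_types n k t}"
  have "(\<Sum>is\<in>?L. \<Prod>i\<leftarrow>is. ?g i)
      = (\<Sum>M\<in>block_types n k t. \<Sum>is | is \<in> ?L \<and> mset is = M. \<Prod>i\<leftarrow>is. ?g i)"
    by (rule sum.group[symmetric]) (auto simp: finite_lists_of_block_types finite_block_types)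
  also have "\<dots> = (\<Sum>M\<in>block_types n k t. \<Sum>is\<in>permutations_of_multiset M. \<Prod>i\<leftarrow>is. ?g i)"
    by (intro sum.cong refl arg_cong[where f = "\<lambda>A. sum _ A"]) (auto simp: permutations_of_multiset_def)
  also have "\<dots> = fact k * (\<Sum>M\<in>block_types n k t. \<Prod>i=1..t. ?g i ^ count M i / fact (count M i))"
    by (simp add: sum_permutations_of_block_type sum_distrib_left)
  finally have "fact k * E_col n k t = fact k * (\<Sum>M\<in>block_types n k t. type_weight n t M)"
    unfolding E_col_eq_sum_bounded_partitions fact_mult_sum_bounded_partitions type_weight_def
    by (simp add: sum_distrib_left mult.left_commute)
  then show ?thesis by simp
qed

lemma mult_ln_Suc_minus_ln_le: "real m * (ln (real m + 1) - ln (real m)) \<le> 1"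
proof (cases "m = 0")
  case False
  then have m: "real m > 0" by simp
  have "ln (real m + 1) - ln (real m) = ln ((real m + 1) / real m)"
    using m by (simp add: ln_div)
  also have "\<dots> \<le> (real m + 1) / real m - 1" by (rule ln_le_minus_one) (use m in simp)
  also have "\<dots> = 1 / real m" using m by (simp add: field_simps)
  finally show ?thesis using m by (simp add: field_simps)
qed simp

lemma ln_fact_ge: "real m * ln (real m) - real m \<le> ln (fact m)"
proof (induction m)
  case (Suc m)
  have "ln (fact (Suc m) :: real) = ln (fact m) + ln (real m + 1)"
    by (simp add: ln_mult add.commute)
  moreover have "real (Suc m) * ln (real (Suc m)) - real (Suc m)
      \<le> real m * ln (real m) - real m + ln (real m + 1)"
    using mult_ln_Suc_minus_ln_le[of m] by (simp add: algebra_simps)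
  ultimately show ?case using Suc by linarith
qed simp

lemma ln_fact_le_Suc: "ln (fact m) \<le> (real m + 1) * ln (real m + 1) - real m"
proof (induction m)
  case (Suc m)
  have fact: "ln (fact (Suc m) :: real) = ln (fact m) + ln (real m + 1)"
    by (simp add: ln_mult add.commute)
  have "(real m + 2) * (ln (real m + 2) - ln (real m + 1)) \<ge> 1"
  proof -
    have "ln ((real m + 1) / (real m + 2)) \<le> (real m + 1) / (real m + 2) - 1"
      by (rule ln_le_minus_one) simp
    then show ?thesis by (simp add: ln_div field_simps)
  qed
  then show ?case using Suc fact by (simp add: algebra_simps)
qed simp

lemma ln_fact_le: "ln (fact m) \<le> real m * ln (real m) - real m + 1 + ln (real m + 1)"
  using ln_fact_le_Suc[of m] mult_ln_Suc_minus_ln_le[of m] by (simp add: algebra_simps)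

lemma d_const_pos: "d_const i > 0"
  unfolding d_const_def by simp

lemma ln_d_const_nonneg: "ln (d_const i) \<ge> 0"
  unfolding d_const_def by (simp add: ln_mult)

lemma ln_d_const_le: "ln (d_const i) \<le> 2 * real i ^ 2"
proof -
  have "real (i choose 2) \<le> real i ^ 2"
    using binomial_le_pow[of 2 i] by (cases "2 \<le> i") (simp_all add: binomial_eq_0 flip: of_nat_power)
  moreover have "ln 2 \<le> (1::real)" using ln_le_minus_one[of 2] by simp
  moreover have "ln (fact i) \<le> real i ^ 2"
  proof (cases "i = 0")
    case False
    have "ln (fact i) \<le> ln (real (i ^ i))"
      by (rule ln_mono) (use fact_le_power[of i] in auto)
    also have "\<dots> = real i * ln (real i)" by (simp add: ln_realpow)
    also have "\<dots> \<le> real i * real i"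
      using False by (intro mult_left_mono) (auto intro: less_imp_le[OF ln_less_self])
    finally show ?thesis by (simp add: power2_eq_square)
  qed simp
  ultimately show ?thesis
    using mult_mono[of "real (i choose 2)" "real i ^ 2" "ln 2" 1]
    by (simp add: d_const_def ln_mult)
qed

lemma xlog_term_eq: "0 \<le> y \<Longrightarrow> xlog_term i y = y * ln y + y * ln (d_const i)"
  unfolding xlog_term_def using d_const_pos[of i] by (auto simp: ln_mult algebra_simps)

lemma mult_ln_self_ge: "0 \<le> (y::real) \<Longrightarrow> y * ln y \<ge> y - 1"
proof (cases "y = 0")
  case False
  assume "0 \<le> y"
  then have y: "y > 0" using False by simp
  have "ln (1/y) \<le> 1/y - 1" by (rule ln_le_minus_one) (use y in simp)
  then have "y * (- ln y) \<le> y * (1/y - 1)" using y by (intro mult_left_mono) (auto simp: ln_div)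
  then show ?thesis using y by (simp add: algebra_simps)
qed simp

text \<open>The slope of \<open>y ln y\<close> is at most \<open>1 + ln N\<close> on \<open>[0, N]\<close> but unbounded below near \<open>0\<close>;
  the additive \<open>1\<close> absorbs the dip of \<open>y ln y\<close> below zero there.\<close>
lemma mult_ln_self_diff_le:
  assumes "0 \<le> y" "0 \<le> z" "y \<le> N" "z \<le> N" "1 \<le> (N::real)"
  shows "y * ln y - z * ln z \<le> \<bar>y - z\<bar> * (1 + ln N) + 1"
proof (cases "z \<le> y")
  case True
  have "z * (ln y - ln z) \<le> y - z"
  proof (cases "z = 0")
    case False
    then have "ln y - ln z = ln (y / z)" using assms True by (simp add: ln_div)
    also have "\<dots> \<le> y / z - 1" using assms True False by (intro ln_le_minus_one) simp
    finally have "ln y - ln z \<le> y / z - 1" .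
    then have "z * (ln y - ln z) \<le> z * (y / z - 1)" using assms by (intro mult_left_mono) auto
    moreover have "z * (y / z - 1) = y - z" using False by (simp add: field_simps)
    ultimately show ?thesis by simp
  qed (use True in simp)
  moreover have "(y - z) * ln y \<le> (y - z) * ln N"
    using assms True by (cases "y = 0") (auto intro: mult_left_mono)
  ultimately have "y * ln y - z * ln z \<le> (y - z) * (1 + ln N)" by (simp add: algebra_simps)
  then show ?thesis using True by simp
next
  case False
  have "0 \<le> \<bar>y - z\<bar> * (1 + ln N)" using assms by simp
  moreover have "y * ln y \<le> z * ln z \<or> y \<le> 1"
    using False assms by (auto intro: mult_mono)
  moreover have "y * ln y \<le> 0" if "y \<le> 1"
    using that assms by (cases "y = 0") (auto simp: mult_nonneg_nonpos)
  moreover have "z * ln z \<ge> -1" using mult_ln_self_ge[of z] assms by simp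
  ultimately show ?thesis by linarith
qed

lemma xlog_term_diff_le:
  assumes "0 \<le> y" "0 \<le> z" "y \<le> N" "z \<le> N" "1 \<le> (N::real)" "\<bar>y - z\<bar> \<le> D"
  shows "xlog_term i y - xlog_term i z \<le> D * (1 + ln N + 2 * real i ^ 2) + 1"
proof -
  have "xlog_term i y - xlog_term i z = (y * ln y - z * ln z) + (y - z) * ln (d_const i)"
    using assms by (simp add: xlog_term_eq algebra_simps)
  also have "\<dots> \<le> (\<bar>y - z\<bar> * (1 + ln N) + 1) + \<bar>y - z\<bar> * ln (d_const i)"
    using mult_ln_self_diff_le[OF assms(1-5)] ln_d_const_nonneg[of i]
    by (intro add_mono) (auto intro: mult_right_mono)
  also have "\<dots> \<le> (D * (1 + ln N) + 1) + D * (2 * real i ^ 2)"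
    using assms ln_d_const_nonneg[of i] ln_d_const_le[of i] by (intro add_mono mult_mono) auto
  finally show ?thesis by (simp add: algebra_simps)
qed

definition L0_objective :: "real \<Rightarrow> real \<Rightarrow> nat \<Rightarrow> (nat \<Rightarrow> real) \<Rightarrow> real" where
  "L0_objective n k t x = n * ln n - n + k - (\<Sum>i=1..t. xlog_term i (x i))"

lemma L0_objective_le:
  assumes "x \<in> P0 n k t"
  shows "L0_objective n k t x \<le> n * ln n - n + k + t"
proof -
  have "-1 \<le> xlog_term i (x i)" if "i \<in> {1..t}" for i
  proof -
    have xi: "x i \<ge> 0" using assms that by (auto simp: P0_def)
    have "x i * ln (d_const i) \<ge> 0" using xi ln_d_const_nonneg[of i] by simp
    then show ?thesis using mult_ln_self_ge[OF xi] xi by (simp add: xlog_term_eq)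
  qed
  then have "(\<Sum>i=1..t. -1) \<le> (\<Sum>i=1..t. xlog_term i (x i))" by (rule sum_mono)
  then show ?thesis unfolding L0_objective_def by simp
qed

lemma bdd_above_L0_objective: "bdd_above (L0_objective n k t ` P0 n k t)"
  using L0_objective_le by (intro bdd_aboveI2) blast

lemma L0_objective_le_L0: "x \<in> P0 n k t \<Longrightarrow> L0_objective n k t x \<le> L0 n k t"
  unfolding L0_def L0_objective_def[symmetric] by (rule cSUP_upper[OF _ bdd_above_L0_objective])

lemma exists_near_optimal_P0:
  assumes "P0 n k t \<noteq> {}"
  obtains x where "x \<in> P0 n k t" "L0 n k t - 1 < L0_objective n k t x"
proof -
  have "L0 n k t - 1 < (SUP x\<in>P0 n k t. L0_objective n k t x)"
    unfolding L0_def L0_objective_def by simp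
  then show ?thesis
    using less_cSUP_iff[OF assms bdd_above_L0_objective] that by auto
qed

lemma counts_in_P0:
  assumes "M \<in> block_types n k t"
  shows "(\<lambda>i. real (count M i)) \<in> P0 (real n) (real k) t"
proof -
  have "count M i = 0" if "i \<notin> {1..t}" for i
    using assms that by (auto simp: block_types_def not_in_iff)
  moreover have "real k = (\<Sum>i=1..t. real (count M i))"
    unfolding block_types_count(1)[OF assms, symmetric] by simp
  moreover have "real n = (\<Sum>i=1..t. real i * real (count M i))"
    unfolding block_types_count(2)[OF assms, symmetric] by simp
  ultimately show ?thesis unfolding P0_def by auto
qed

lemma type_weight_pos: "type_weight n t M > 0"
  unfolding type_weight_def by (intro mult_pos_pos prod_pos ballI divide_pos_pos zero_less_power)
    (simp_all add: d_const_pos)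

lemma ln_type_weight:
  "ln (type_weight n t M)
   = ln (fact n) - (\<Sum>i=1..t. real (count M i) * ln (d_const i) + ln (fact (count M i)))"
proof -
  let ?f = "\<lambda>i. (1 / d_const i) ^ count M i / fact (count M i)"
  have pos: "?f i > 0" for i using d_const_pos[of i] by simp
  have "ln (?f i) = - (real (count M i) * ln (d_const i) + ln (fact (count M i)))" for i
    using d_const_pos[of i] by (simp add: ln_div ln_realpow)
  moreover have "ln (\<Prod>i=1..t. ?f i) = (\<Sum>i=1..t. ln (?f i))"
    using pos by (intro ln_prod) (auto simp: less_imp_neq[symmetric] d_const_pos)
  moreover have "(\<Prod>i=1..t. ?f i) > 0" using pos by (simp add: prod_pos)
  then have "ln (type_weight n t M) = ln (fact n) + ln (\<Prod>i=1..t. ?f i)"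
    unfolding type_weight_def by (simp only: ln_mult_pos[OF fact_gt_zero])
  ultimately show ?thesis by (simp add: sum_negf[symmetric] sum.distrib sum_subtractf)
qed

lemma L0_objective_counts:
  "L0_objective (real n) (real k) t (\<lambda>i. real (count M i)) = real n * ln (real n) - real n + real k
     - (\<Sum>i=1..t. real (count M i) * ln (real (count M i)) + real (count M i) * ln (d_const i))"
  unfolding L0_objective_def by (simp add: xlog_term_eq)

lemma ln_type_weight_le:
  assumes "M \<in> block_types n k t"
  shows "ln (type_weight n t M)
    \<le> L0_objective (real n) (real k) t (\<lambda>i. real (count M i)) + 1 + ln (real n + 1)"
proof -
  have k: "real k = (\<Sum>i=1..t. real (count M i))"
    unfolding block_types_count(1)[OF assms, symmetric] by simp
  have "(\<Sum>i=1..t. real (count M i) * ln (real (count M i)) - real (count M i))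
     \<le> (\<Sum>i=1..t. ln (fact (count M i)))"
    by (intro sum_mono ln_fact_ge)
  then show ?thesis
    unfolding ln_type_weight L0_objective_counts using ln_fact_le[of n] k
    by (simp add: sum.distrib sum_subtractf algebra_simps)
qed

lemma ln_type_weight_ge:
  assumes "M \<in> block_types n k t" "k \<le> n"
  shows "L0_objective (real n) (real k) t (\<lambda>i. real (count M i)) - real t * (1 + ln (real n + 1))
    \<le> ln (type_weight n t M)"
proof -
  have k: "real k = (\<Sum>i=1..t. real (count M i))"
    unfolding block_types_count(1)[OF assms(1), symmetric] by simp
  have "ln (fact (count M i)) \<le> real (count M i) * ln (real (count M i)) - real (count M i) + 1 + ln (real n + 1)" for i
  proof -
    have "count M i \<le> n" using count_le_size[of M i] assms by (simp add: block_types_def)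
    then have "ln (real (count M i) + 1) \<le> ln (real n + 1)" by simp
    then show ?thesis using ln_fact_le[of "count M i"] by linarith
  qed
  then have "(\<Sum>i=1..t. ln (fact (count M i)))
      \<le> (\<Sum>i=1..t. real (count M i) * ln (real (count M i)) - real (count M i) + 1 + ln (real n + 1))"
    by (intro sum_mono)
  then show ?thesis
    unfolding ln_type_weight L0_objective_counts using ln_fact_ge[of n] k
    by (simp add: sum.distrib sum_subtractf algebra_simps)
qed

lemma card_block_types_le: "card (block_types n k t) \<le> (k + 1) ^ t"
proof -
  let ?f = "\<lambda>M. restrict (count M) {1..t}"
  have "inj_on ?f (block_types n k t)"
  proof
    fix M M' assume "M \<in> block_types n k t" "M' \<in> block_types n k t" and eq: "?f M = ?f M'"
    then have "set_mset M \<subseteq> {1..t}" "set_mset M' \<subseteq> {1..t}" by (auto simp: block_types_def)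
    then show "M = M'"
      using fun_cong[OF eq] by (intro multiset_eqI) (metis restrict_apply' count_eq_zero_iff subsetD)
  qed
  moreover have "?f ` block_types n k t \<subseteq> PiE {1..t} (\<lambda>_. {0..k})"
    using count_le_size by (fastforce simp: block_types_def)
  ultimately have "card (block_types n k t) \<le> card (PiE {1..t} (\<lambda>_. {0..k}))"
    by (intro card_inj_on_le) (auto simp: finite_PiE)
  then show ?thesis by (simp add: card_PiE)
qed

lemma block_types_nonempty:
  assumes "k \<le> n" "n \<le> k * t" "1 \<le> t"
  shows "block_types n k t \<noteq> {}"
  using assms(1,2)
proof (induction k arbitrary: n)
  case 0
  then show ?case by (auto simp: block_types_def)
next
  case (Suc k)
  define j where "j = min t (n - k)"
  have j: "j \<in> {1..t}" "j \<le> n" using Suc.prems assms(3) by (auto simp: j_def)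
  have "k \<le> n - j" "n - j \<le> k * t"
    using Suc.prems by (auto simp: j_def min_def)
  then obtain M where "M \<in> block_types (n - j) k t" using Suc.IH by blast
  then have "add_mset j M \<in> block_types n (Suc k) t" using j by (auto simp: block_types_def)
  then show ?case by blast
qed

lemma sum_fractional_parts_bounds:
  fixes f :: "nat \<Rightarrow> real"
  assumes f: "\<And>i. i \<in> {1..t} \<Longrightarrow> 0 \<le> f i \<and> f i < 1" and t: "1 \<le> t"
  shows "0 \<le> (\<Sum>i=1..t. f i)" "(\<Sum>i=1..t. f i) < real t"
    "(\<Sum>i=1..t. f i) \<le> (\<Sum>i=1..t. real i * f i)"
    "(\<Sum>i=1..t. real i * f i) \<le> real t * (\<Sum>i=1..t. f i)"
proof -
  show "0 \<le> (\<Sum>i=1..t. f i)" using f by (intro sum_nonneg) simp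
  show "(\<Sum>i=1..t. f i) < real t"
    using sum_strict_mono[of "{1..t}" f "\<lambda>_. 1"] f t by simp
  show "(\<Sum>i=1..t. f i) \<le> (\<Sum>i=1..t. real i * f i)"
  proof (rule sum_mono)
    fix i assume "i \<in> {1..t}"
    then show "f i \<le> real i * f i" using f[of i] by (simp add: mult_le_cancel_right1)
  qed
  show "(\<Sum>i=1..t. real i * f i) \<le> real t * (\<Sum>i=1..t. f i)"
    unfolding sum_distrib_left using f by (intro sum_mono mult_right_mono) auto
qed

lemma floor_block_type:
  assumes x: "x \<in> P0 (real n) (real k) t" and t: "1 \<le> t"
  obtains A where "set_mset A \<subseteq> {1..t}" "size A \<le> k" "sum_mset A \<le> n" "k - size A < t"
    "block_types (n - sum_mset A) (k - size A) t \<noteq> {}"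
    "\<And>i. i \<in> {1..t} \<Longrightarrow> 0 \<le> x i - real (count A i) \<and> x i - real (count A i) < 1"
proof -
  define a where "a i = nat \<lfloor>x i\<rfloor>" for i
  define f where "f i = x i - real (a i)" for i
  define A where "A = (\<Sum>i\<in>{1..t}. replicate_mset (a i) i)"
  have count_A: "count A i = (if i \<in> {1..t} then a i else 0)" for i
    by (simp add: A_def count_sum)
  have f: "0 \<le> f i \<and> f i < 1" if "i \<in> {1..t}" for i
    using x that unfolding f_def a_def P0_def by auto linarith+
  have A: "set_mset A \<subseteq> {1..t}"
  proof
    fix i assume "i \<in># A"
    then show "i \<in> {1..t}" using count_A[of i] by (metis count_eq_zero_iff)
  qed
  have r: "real k - real (size A) = (\<Sum>i=1..t. f i)"
    using x unfolding size_eq_sum_count[OF finite_atLeastAtMost A] count_A f_def P0_def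
    by (simp add: sum_subtractf)
  have s: "real n - real (sum_mset A) = (\<Sum>i=1..t. real i * f i)"
    using x unfolding sum_mset_eq_sum_mult_count[OF finite_atLeastAtMost A] count_A f_def P0_def
    by (simp add: sum_subtractf algebra_simps del: of_nat_sum_mset)
  note bounds = sum_fractional_parts_bounds[of t f, OF f t]
  then have "real (size A) \<le> real k" "real (sum_mset A) \<le> real n"
    using r s by (linarith, linarith)
  then have "size A \<le> k" "sum_mset A \<le> n" by (simp_all only: of_nat_le_iff)
  then have "real (k - size A) = (\<Sum>i=1..t. f i)" "real (n - sum_mset A) = (\<Sum>i=1..t. real i * f i)"
    using r s by (simp_all only: of_nat_diff)
  then have "real (k - size A) \<le> real (n - sum_mset A)"
    "real (n - sum_mset A) \<le> real ((k - size A) * t)" "real (k - size A) < real t"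
    using bounds by (simp_all add: mult.commute)
  then have "k - size A \<le> n - sum_mset A" "n - sum_mset A \<le> (k - size A) * t" "k - size A < t"
    by (simp_all only: of_nat_le_iff of_nat_less_iff)
  then show ?thesis
    using that[OF A \<open>size A \<le> k\<close> \<open>sum_mset A \<le> n\<close>] block_types_nonempty[OF _ _ t] f
    by (simp add: count_A f_def)
qed

lemma round_P0_to_block_type:
  assumes x: "x \<in> P0 (real n) (real k) t" and t: "1 \<le> t"
  obtains M where "M \<in> block_types n k t" "\<And>i. i \<in> {1..t} \<Longrightarrow> \<bar>real (count M i) - x i\<bar> \<le> real t"
proof -
  obtain A where A: "set_mset A \<subseteq> {1..t}" "size A \<le> k" "sum_mset A \<le> n" "k - size A < t"
    "block_types (n - sum_mset A) (k - size A) t \<noteq> {}"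
    and floor: "\<And>i. i \<in> {1..t} \<Longrightarrow> 0 \<le> x i - real (count A i) \<and> x i - real (count A i) < 1"
    using floor_block_type[OF x t] by blast
  then obtain B where B: "B \<in> block_types (n - sum_mset A) (k - size A) t" by blast
  show ?thesis
  proof (rule that[of "A + B"])
    show "A + B \<in> block_types n k t" using A B by (auto simp: block_types_def)
    fix i assume i: "i \<in> {1..t}"
    have "count B i \<le> k - size A" using B count_le_size[of B i] by (simp add: block_types_def)
    then have "real (count B i) \<le> real t" using \<open>k - size A < t\<close> by simp
    moreover have "1 \<le> real t" using t by simp
    ultimately show "\<bar>real (count (A + B) i) - x i\<bar> \<le> real t"
      using floor[OF i] by (simp add: abs_le_iff)
  qed
qed

lemma E_col_pos: "block_types n k t \<noteq> {} \<Longrightarrow> E_col n k t > 0"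
  unfolding E_col_eq_sum_block_types by (intro sum_pos finite_block_types type_weight_pos)

lemma ln_E_col_le:
  assumes "block_types n k t \<noteq> {}"
  shows "ln (E_col n k t) \<le> L0 (real n) (real k) t + real t * ln (real k + 1) + 1 + ln (real n + 1)"
proof -
  define B where "B = exp (L0 (real n) (real k) t + 1 + ln (real n + 1))"
  have "type_weight n t M \<le> B" if M: "M \<in> block_types n k t" for M
  proof -
    have "ln (type_weight n t M) \<le> L0 (real n) (real k) t + 1 + ln (real n + 1)"
      using ln_type_weight_le[OF M] L0_objective_le_L0[OF counts_in_P0[OF M]] by linarith
    then have "exp (ln (type_weight n t M)) \<le> B" unfolding B_def by simp
    then show ?thesis using type_weight_pos[of n t M] by simp
  qed
  then have "E_col n k t \<le> (\<Sum>M\<in>block_types n k t. B)"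
    unfolding E_col_eq_sum_block_types by (rule sum_mono)
  also have "\<dots> = real (card (block_types n k t)) * B" by simp
  also have "\<dots> \<le> (real k + 1) ^ t * B"
  proof (rule mult_right_mono)
    have "real (card (block_types n k t)) \<le> real ((k + 1) ^ t)"
      using card_block_types_le[of n k t] by (simp only: of_nat_le_iff)
    then show "real (card (block_types n k t)) \<le> (real k + 1) ^ t" by (simp add: add.commute)
  qed (simp add: B_def)
  finally have "ln (E_col n k t) \<le> ln ((real k + 1) ^ t * B)"
    using E_col_pos[OF assms] by simp
  then show ?thesis by (simp add: B_def ln_mult ln_realpow)
qed

lemma L0_objective_counts_ge:
  assumes x: "x \<in> P0 (real n) (real k) t" and M: "M \<in> block_types n k t" and "k \<le> n"
    and near: "\<And>i. i \<in> {1..t} \<Longrightarrow> \<bar>real (count M i) - x i\<bar> \<le> real t"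
  shows "L0_objective (real n) (real k) t x - real t * (real t * (1 + ln (real n + 1) + 2 * real t ^ 2) + 1)
    \<le> L0_objective (real n) (real k) t (\<lambda>i. real (count M i))"
proof -
  let ?l = "1 + ln (real n + 1)"
  have "xlog_term i (real (count M i)) - xlog_term i (x i) \<le> real t * (?l + 2 * real t ^ 2) + 1"
    if i: "i \<in> {1..t}" for i
  proof -
    have "x i \<le> real k"
      using x i member_le_sum[of i "{1..t}" x] by (auto simp: P0_def)
    moreover have "count M i \<le> k" using M count_le_size[of M i] by (simp add: block_types_def)
    ultimately have "xlog_term i (real (count M i)) - xlog_term i (x i)
        \<le> real t * (?l + 2 * real i ^ 2) + 1"
      using x i near[OF i] \<open>k \<le> n\<close> by (intro xlog_term_diff_le) (auto simp: P0_def)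
    also have "\<dots> \<le> real t * (?l + 2 * real t ^ 2) + 1"
      using i by (intro add_right_mono mult_left_mono) auto
    finally show ?thesis .
  qed
  then have "(\<Sum>i=1..t. xlog_term i (real (count M i)) - xlog_term i (x i))
      \<le> (\<Sum>i=1..t. real t * (?l + 2 * real t ^ 2) + 1)"
    by (rule sum_mono)
  then show ?thesis unfolding L0_objective_def by (simp add: sum_subtractf)
qed

lemma type_weight_le_E_col: "M \<in> block_types n k t \<Longrightarrow> type_weight n t M \<le> E_col n k t"
  unfolding E_col_eq_sum_block_types
  by (intro member_le_sum finite_block_types less_imp_le[OF type_weight_pos])

lemma ln_E_col_ge:
  assumes t: "1 \<le> t" and "k \<le> n" "n \<le> k * t"
  shows "L0 (real n) (real k) t - (1 + real t + (real t + real t ^ 2) * (1 + ln (real n + 1)) + 2 * real t ^ 4)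
    \<le> ln (E_col n k t)"
proof -
  obtain M0 where "M0 \<in> block_types n k t" using block_types_nonempty assms by blast
  then have "P0 (real n) (real k) t \<noteq> {}" using counts_in_P0 by blast
  then obtain x where x: "x \<in> P0 (real n) (real k) t"
    and x_opt: "L0 (real n) (real k) t - 1 < L0_objective (real n) (real k) t x"
    by (rule exists_near_optimal_P0)
  obtain M where M: "M \<in> block_types n k t"
    and near: "\<And>i. i \<in> {1..t} \<Longrightarrow> \<bar>real (count M i) - x i\<bar> \<le> real t"
    using round_P0_to_block_type[OF x t] by blast
  have "ln (type_weight n t M) \<le> ln (E_col n k t)"
    using type_weight_le_E_col[OF M] type_weight_pos[of n t M] by simp
  then show ?thesis
    using L0_objective_counts_ge[OF x M \<open>k \<le> n\<close> near] ln_type_weight_ge[OF M \<open>k \<le> n\<close>] x_opt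
    by (simp add: algebra_simps power2_eq_square power4_eq_xxxx)
qed

lemma abs_ln_E_col_minus_L0_le:
  assumes "1 \<le> t" "k \<le> n" "n \<le> k * t"
  shows "\<bar>ln (E_col n k t) - L0 (real n) (real k) t\<bar>
    \<le> (real t + 1) ^ 2 * (1 + ln (real n + 1)) + 2 * real t ^ 4"
proof -
  let ?l = "1 + ln (real n + 1)"
  have "1 \<le> ?l" by simp
  have "ln (real k + 1) \<le> ln (real n + 1)" using \<open>k \<le> n\<close> by simp
  then have "real t * ln (real k + 1) \<le> real t * ?l" by (intro mult_left_mono) linarith+
  then have "real t * ln (real k + 1) + 1 + ln (real n + 1) \<le> (real t + 1) * ?l"
    by (simp add: algebra_simps)
  also have "\<dots> \<le> (real t + 1) ^ 2 * ?l"
    using \<open>1 \<le> ?l\<close> by (intro mult_right_mono) (auto simp: power2_eq_square)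
  finally have upper: "ln (E_col n k t) - L0 (real n) (real k) t \<le> (real t + 1) ^ 2 * ?l"
    using ln_E_col_le[of n k t] block_types_nonempty assms by fastforce
  have "1 + real t \<le> (1 + real t) * ?l"
    using \<open>1 \<le> ?l\<close> by (intro mult_le_cancel_left1[THEN iffD2]) auto
  then have "1 + real t + (real t + real t ^ 2) * ?l \<le> (real t + 1) ^ 2 * ?l"
    by (simp add: algebra_simps power2_eq_square)
  then have lower: "L0 (real n) (real k) t - ln (E_col n k t) \<le> (real t + 1) ^ 2 * ?l + 2 * real t ^ 4"
    using ln_E_col_ge[OF assms] by linarith
  have "0 \<le> real t ^ 4" by simp
  then show ?thesis unfolding abs_le_iff using upper lower by linarith
qed

lemma power2_mult_add_power4_le:
  fixes u l V :: real
  assumes "0 \<le> u" "u + 1 \<le> V" "0 \<le> l" "l \<le> 3 * V"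
  shows "(u + 1) ^ 2 * l + 2 * u ^ 4 \<le> 5 * V ^ 4"
proof -
  have "(u + 1) ^ 2 * l \<le> V ^ 2 * (3 * V)"
    using assms by (intro mult_mono power_mono) auto
  also have "\<dots> \<le> 3 * V ^ 4"
    using assms by (simp add: power2_eq_square power4_eq_xxxx)
  finally have "(u + 1) ^ 2 * l \<le> 3 * V ^ 4" .
  moreover have "u ^ 4 \<le> V ^ 4" using assms by (intro power_mono) auto
  ultimately show ?thesis by linarith
qed

lemma ln_add_one_le_twice_ln: "2 \<le> x \<Longrightarrow> ln (x + 1) \<le> 2 * ln (x::real)"
proof -
  assume "2 \<le> x"
  then have "2 * x \<le> x * x" by (intro mult_right_mono) auto
  then have "x + 1 \<le> x ^ 2" using \<open>2 \<le> x\<close> unfolding power2_eq_square by linarith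
  then have "ln (x + 1) \<le> ln (x ^ 2)" using \<open>2 \<le> x\<close> by simp
  also have "\<dots> = 2 * ln x" using \<open>2 \<le> x\<close> by (simp add: ln_realpow)
  finally show ?thesis .
qed

lemma abs_ln_E_col_minus_L0_le_ln_power4:
  assumes t: "1 \<le> t" "real t \<le> C0 * ln (real n)" and "0 \<le> C0" "3 \<le> n" "k \<le> n" "n \<le> k * t"
  shows "\<bar>ln (E_col n k t) - L0 (real n) (real k) t\<bar> \<le> 5 * (C0 + 1) ^ 4 * ln (real n) ^ 4"
proof -
  let ?L = "ln (real n)" and ?V = "(C0 + 1) * ln (real n)"
  have "1 \<le> ?L" using \<open>3 \<le> n\<close> exp_le by (subst ln_ge_iff) auto
  have V: "?V = C0 * ?L + ?L" and "0 \<le> C0 * ?L"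
    using \<open>0 \<le> C0\<close> \<open>1 \<le> ?L\<close> by (simp_all add: algebra_simps)
  then have "real t + 1 \<le> ?V" "1 + ln (real n + 1) \<le> 3 * ?V"
    using t ln_add_one_le_twice_ln[of "real n"] \<open>3 \<le> n\<close> \<open>1 \<le> ?L\<close> by simp_all
  then have "(real t + 1) ^ 2 * (1 + ln (real n + 1)) + 2 * real t ^ 4 \<le> 5 * ?V ^ 4"
    by (intro power2_mult_add_power4_le) simp_all
  then show ?thesis
    using abs_ln_E_col_minus_L0_le[OF t(1) \<open>k \<le> n\<close> \<open>n \<le> k * t\<close>] by (simp add: power_mult_distrib)
qed

theorem lemma30:
  fixes t :: "nat \<Rightarrow> nat"
  assumes tpos: "\<And>n. t n > 0"
    and tlog: "(\<lambda>n. real (t n)) \<in> O(\<lambda>n. ln (real n))"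
  shows "\<exists>C N. \<forall>n\<ge>N. \<forall>k::nat. k > 0 \<and> 1 < real n / real k \<and> real n / real k < real (t n)
           \<longrightarrow> \<bar>ln (E_col n k (t n)) - L0 (real n) (real k) (t n)\<bar> \<le> C * (ln (real n)) ^ 4"
proof -
  obtain C0 where "C0 > 0" and "eventually (\<lambda>n. norm (real (t n)) \<le> C0 * norm (ln (real n))) at_top"
    using tlog by (elim landau_o.bigE)
  then obtain N0 where N0: "\<And>n. n \<ge> N0 \<Longrightarrow> real (t n) \<le> C0 * \<bar>ln (real n)\<bar>"
    by (auto simp: eventually_at_top_linorder)
  have "\<bar>ln (E_col n k (t n)) - L0 (real n) (real k) (t n)\<bar> \<le> 5 * (C0 + 1) ^ 4 * ln (real n) ^ 4"
    if n: "n \<ge> max N0 3" and k: "k > 0 \<and> 1 < real n / real k \<and> real n / real k < real (t n)" for n k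
  proof -
    have "real k < real n" "real n < real (k * t n)" using k by (auto simp: field_simps)
    then have "k \<le> n" "n \<le> k * t n" by (simp_all only: of_nat_less_iff less_imp_le)
    moreover have "real (t n) \<le> C0 * ln (real n)" using N0[of n] n by simp
    ultimately show ?thesis
      using tpos[of n] n \<open>C0 > 0\<close> by (intro abs_ln_E_col_minus_L0_le_ln_power4) auto
  qed
  then show ?thesis by blast
qed

end
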